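(* Let $X=\{x_1,\dots,x_n\}$ be a set of Boolean variables and $\mathcal{C}=\{C_1,\dots,C_m\}$ a set of clauses, each consisting of exactly three positive literals (variables from $X$). Let $(G,L)$ be the graph and list assignment constructed from $(\mathcal{C},X)$ as described in the context. Then there is a truth assignment for $X$ such that every clause contains at least one true literal and at least one false literal if and only if $G$ has a colouring that respects $L$.
   Context: Construction of $(G,L)$: for each $x_i\in X$ introduce two adjacent vertices $x_i$ and $\overline{x}_i$ (called $x$-type) with $L(x_i)=L(\overline{x}_i)=\{4,5\}$. For each clause $C_j$ introduce two vertices $C_j$ and $C_j'$ (called $C$-type) with $L(C_j)=L(C_j')=\{1,2,3\}$. Add an edge between every $x$-type vertex and every $C$-type vertex. For each clause $C_j$, fix an order of its literals, say $C_j=\{x_g,x_h,x_i\}$ in that order, and add six new vertices $a_{g,j},a_{h,j},a_{i,j},a'_{g,j},a'_{h,j},a'_{i,j}$ (called $a$-type) with edges $x_ga_{g,j}$, $a_{g,j}C_j$, $x_ha_{h,j}$, $a_{h,j}C_j$, $x_ia_{i,j}$, $a_{i,j}C_j$, $\overline{x}_ga'_{g,j}$, $a'_{g,j}C_j'$, $\overline{x}_ha'_{h,j}$, $a'_{h,j}C_j'$, $\overline{x}_ia'_{i,j}$, $a'_{i,j}C_j'$, and lists $L(a_{g,j})=L(a'_{g,j})=\{1,4\}$, $L(a_{h,j})=L(a'_{h,j})=\{2,4\}$, $L(a_{i,j})=L(a'_{i,j})=\{3,4\}$. A colouring of $G$ is a map $c$ from vertices to positive integers with adjacent vertices receiving distinct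 colours; it respects $L$ if $c(u)\in L(u)$ for every vertex $u$. *)

theory Defs
  imports Main
begin

text \<open>Instance: variables x_0..x_{n-1} (indices i < n), clauses C_0..C_{m-1} (j < m);
  cl j p (p < 3) is the variable of the p-th literal of clause j in the fixed order.\<close>

definition nae_satisfiable :: "nat \<Rightarrow> nat \<Rightarrow> (nat \<Rightarrow> nat \<Rightarrow> nat) \<Rightarrow> bool" where
  "nae_satisfiable n m cl \<longleftrightarrow>
     (\<exists>\<tau> :: nat \<Rightarrow> bool. \<forall>j<m. (\<exists>p<3. \<tau> (cl j p)) \<and> (\<exists>p<3. \<not> \<tau> (cl j p)))"

text \<open>Vertices: X i = x_i, Xb i = overline x_i, Cv j = C_j, Cv' j = C_j',
  A j p = a_{g,j} where g = cl j p, A' j p = a'_{g,j}.\<close>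
datatype vtx = X nat | Xb nat | Cv nat | Cv' nat | A nat nat | A' nat nat

definition vertices :: "nat \<Rightarrow> nat \<Rightarrow> vtx set" where
  "vertices n m = {X i | i. i < n} \<union> {Xb i | i. i < n} \<union> {Cv j | j. j < m} \<union> {Cv' j | j. j < m}
     \<union> {A j p | j p. j < m \<and> p < 3} \<union> {A' j p | j p. j < m \<and> p < 3}"

definition xtype :: "nat \<Rightarrow> vtx set" where
  "xtype n = {X i | i. i < n} \<union> {Xb i | i. i < n}"

definition ctype :: "nat \<Rightarrow> vtx set" where
  "ctype m = {Cv j | j. j < m} \<union> {Cv' j | j. j < m}"

definition edge0 :: "nat \<Rightarrow> nat \<Rightarrow> (nat \<Rightarrow> nat \<Rightarrow> nat) \<Rightarrow> vtx \<Rightarrow> vtx \<Rightarrow> bool" where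
  "edge0 n m cl u v \<longleftrightarrow>
     (\<exists>i<n. u = X i \<and> v = Xb i)
   \<or> (u \<in> xtype n \<and> v \<in> ctype m)
   \<or> (\<exists>j<m. \<exists>p<3. (u = X (cl j p) \<and> v = A j p) \<or> (u = A j p \<and> v = Cv j)
                 \<or> (u = Xb (cl j p) \<and> v = A' j p) \<or> (u = A' j p \<and> v = Cv' j))"

definition edge :: "nat \<Rightarrow> nat \<Rightarrow> (nat \<Rightarrow> nat \<Rightarrow> nat) \<Rightarrow> vtx \<Rightarrow> vtx \<Rightarrow> bool" where
  "edge n m cl u v \<longleftrightarrow> edge0 n m cl u v \<or> edge0 n m cl v u"

fun lists :: "vtx \<Rightarrow> nat set" where
  "lists (X i) = {4, 5}"
| "lists (Xb i) = {4, 5}"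
| "lists (Cv j) = {1, 2, 3}"
| "lists (Cv' j) = {1, 2, 3}"
| "lists (A j p) = {p + 1, 4}"
| "lists (A' j p) = {p + 1, 4}"

definition has_L_colouring :: "nat \<Rightarrow> nat \<Rightarrow> (nat \<Rightarrow> nat \<Rightarrow> nat) \<Rightarrow> bool" where
  "has_L_colouring n m cl \<longleftrightarrow>
     (\<exists>c :: vtx \<Rightarrow> nat.
        (\<forall>u\<in>vertices n m. c u > 0 \<and> c u \<in> lists u)
      \<and> (\<forall>u\<in>vertices n m. \<forall>v\<in>vertices n m. edge n m cl u v \<longrightarrow> c u \<noteq> c v))"

end

theory Submission
  imports Defs
begin

text \<open>A truth assignment \<tau> is encoded by colouring x_i with 5 exactly when \<tau> x_i holds, and
  C_j (resp. C_j') with the index of a true (resp. false) literal of C_j. Conversely, the colour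
  q + 1 of C_j forces a_{q,j} to take colour 4 and hence the q-th literal x to take colour 5;
  the colour r + 1 of C_j' likewise forces overline x to take colour 5, so x does not. Reading
  "colour 5 on x_i" as "x_i true" therefore gives a not-all-equal assignment.\<close>

definition is_L_colouring :: "nat \<Rightarrow> nat \<Rightarrow> (nat \<Rightarrow> nat \<Rightarrow> nat) \<Rightarrow> (vtx \<Rightarrow> nat) \<Rightarrow> bool" where
  "is_L_colouring n m cl c \<longleftrightarrow>
     (\<forall>u\<in>vertices n m. c u > 0 \<and> c u \<in> lists u)
   \<and> (\<forall>u\<in>vertices n m. \<forall>v\<in>vertices n m. edge n m cl u v \<longrightarrow> c u \<noteq> c v)"

lemma has_L_colouring_iff: "has_L_colouring n m cl \<longleftrightarrow> (\<exists>c. is_L_colouring n m cl c)"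
  unfolding has_L_colouring_def is_L_colouring_def ..

lemma is_L_colouringI:
  assumes "\<And>u. u \<in> vertices n m \<Longrightarrow> c u > 0 \<and> c u \<in> lists u"
    and "\<And>u v. edge0 n m cl u v \<Longrightarrow> c u \<noteq> c v"
  shows "is_L_colouring n m cl c"
  using assms unfolding is_L_colouring_def edge_def by metis

definition colouring_of_assignment ::
    "(nat \<Rightarrow> bool) \<Rightarrow> (nat \<Rightarrow> nat) \<Rightarrow> (nat \<Rightarrow> nat) \<Rightarrow> (nat \<Rightarrow> nat \<Rightarrow> nat) \<Rightarrow> vtx \<Rightarrow> nat" where
  "colouring_of_assignment \<tau> t f cl v = (case v of
       X i \<Rightarrow> if \<tau> i then 5 else 4
     | Xb i \<Rightarrow> if \<tau> i then 4 else 5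
     | Cv j \<Rightarrow> t j + 1
     | Cv' j \<Rightarrow> f j + 1
     | A j p \<Rightarrow> if \<tau> (cl j p) then 4 else p + 1
     | A' j p \<Rightarrow> if \<tau> (cl j p) then p + 1 else 4)"

lemma colouring_of_assignment_is_L_colouring:
  assumes t: "\<And>j. j < m \<Longrightarrow> t j < 3 \<and> \<tau> (cl j (t j))"
    and f: "\<And>j. j < m \<Longrightarrow> f j < 3 \<and> \<not> \<tau> (cl j (f j))"
  shows "is_L_colouring n m cl (colouring_of_assignment \<tau> t f cl)"
proof (rule is_L_colouringI)
  fix u assume "u \<in> vertices n m"
  then show "colouring_of_assignment \<tau> t f cl u > 0
      \<and> colouring_of_assignment \<tau> t f cl u \<in> lists u"
    unfolding vertices_def colouring_of_assignment_def by auto (use t f in fastforce)+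
next
  fix u v assume "edge0 n m cl u v"
  then show "colouring_of_assignment \<tau> t f cl u \<noteq> colouring_of_assignment \<tau> t f cl v"
    unfolding edge0_def xtype_def ctype_def colouring_of_assignment_def
    by (auto split: if_splits) (use t f in fastforce)+
qed

lemma nae_satisfiable_imp_has_L_colouring:
  assumes "nae_satisfiable n m cl"
  shows "has_L_colouring n m cl"
proof -
  obtain \<tau> where \<tau>: "\<forall>j<m. (\<exists>p<3. \<tau> (cl j p)) \<and> (\<exists>p<3. \<not> \<tau> (cl j p))"
    using assms unfolding nae_satisfiable_def by blast
  then obtain t where "\<And>j. j < m \<Longrightarrow> t j < 3 \<and> \<tau> (cl j (t j))" by metis
  moreover from \<tau> obtain f where "\<And>j. j < m \<Longrightarrow> f j < 3 \<and> \<not> \<tau> (cl j (f j))" by metis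
  ultimately show ?thesis
    unfolding has_L_colouring_iff by (blast intro: colouring_of_assignment_is_L_colouring)
qed

context
  fixes n m cl c
  assumes cl_range: "\<forall>j<m. \<forall>p<3. cl j p < n"
    and colouring: "is_L_colouring n m cl c"
begin

lemma colour_in_lists: "u \<in> vertices n m \<Longrightarrow> c u \<in> lists u"
  using colouring unfolding is_L_colouring_def by blast

lemma colour_edge0_distinct:
  "u \<in> vertices n m \<Longrightarrow> v \<in> vertices n m \<Longrightarrow> edge0 n m cl u v \<Longrightarrow> c u \<noteq> c v"
  using colouring unfolding is_L_colouring_def edge_def by blast

lemma clause_vertex_colour:
  assumes "j < m"
  obtains q where "q < 3" "c (Cv j) = q + 1" "c (A j q) = 4" "c (X (cl j q)) = 5"
proof -
  have VC: "Cv j \<in> vertices n m" using assms by (auto simp: vertices_def)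
  then obtain q where q: "q < 3" "c (Cv j) = q + 1" using colour_in_lists by force
  have VA: "A j q \<in> vertices n m" and VX: "X (cl j q) \<in> vertices n m"
    using assms q cl_range by (auto simp: vertices_def)
  have "c (A j q) \<noteq> c (Cv j)"
    using assms q by (intro colour_edge0_distinct[OF VA VC]) (auto simp: edge0_def)
  then have A4: "c (A j q) = 4" using colour_in_lists[OF VA] q by auto
  have "c (X (cl j q)) \<noteq> c (A j q)"
    using assms q by (intro colour_edge0_distinct[OF VX VA]) (auto simp: edge0_def)
  then have "c (X (cl j q)) = 5" using colour_in_lists[OF VX] A4 by auto
  with q A4 show thesis by (rule that)
qed

lemma clause'_vertex_colour:
  assumes "j < m"
  obtains r where "r < 3" "c (Cv' j) = r + 1" "c (A' j r) = 4" "c (Xb (cl j r)) = 5"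
proof -
  have VC: "Cv' j \<in> vertices n m" using assms by (auto simp: vertices_def)
  then obtain r where r: "r < 3" "c (Cv' j) = r + 1" using colour_in_lists by force
  have VA: "A' j r \<in> vertices n m" and VX: "Xb (cl j r) \<in> vertices n m"
    using assms r cl_range by (auto simp: vertices_def)
  have "c (A' j r) \<noteq> c (Cv' j)"
    using assms r by (intro colour_edge0_distinct[OF VA VC]) (auto simp: edge0_def)
  then have A4: "c (A' j r) = 4" using colour_in_lists[OF VA] r by auto
  have "c (Xb (cl j r)) \<noteq> c (A' j r)"
    using assms r by (intro colour_edge0_distinct[OF VX VA]) (auto simp: edge0_def)
  then have "c (Xb (cl j r)) = 5" using colour_in_lists[OF VX] A4 by auto
  with r A4 show thesis by (rule that)
qed

lemma colour_X_Xb_distinct: "i < n \<Longrightarrow> c (X i) \<noteq> c (Xb i)"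
  by (rule colour_edge0_distinct) (auto simp: vertices_def edge0_def)

lemma nae_satisfiable_of_L_colouring: "nae_satisfiable n m cl"
  unfolding nae_satisfiable_def
proof (intro exI[of _ "\<lambda>i. c (X i) = 5"] allI impI conjI)
  fix j assume j: "j < m"
  obtain q where "q < 3" "c (X (cl j q)) = 5" using clause_vertex_colour[OF j] .
  then show "\<exists>p<3. c (X (cl j p)) = 5" by blast
  obtain r where r: "r < 3" "c (Xb (cl j r)) = 5" using clause'_vertex_colour[OF j] .
  then have "c (X (cl j r)) \<noteq> 5"
    using colour_X_Xb_distinct cl_range j by metis
  with r show "\<exists>p<3. c (X (cl j p)) \<noteq> 5" by blast
qed

end

theorem lemma1:
  fixes n m :: nat and cl :: "nat \<Rightarrow> nat \<Rightarrow> nat"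
  assumes "\<forall>j<m. \<forall>p<3. cl j p < n"
    and "\<forall>j<m. cl j 0 \<noteq> cl j 1 \<and> cl j 0 \<noteq> cl j 2 \<and> cl j 1 \<noteq> cl j 2"
  shows "nae_satisfiable n m cl \<longleftrightarrow> has_L_colouring n m cl"
  \<comment> \<open>The literals of a clause need not be distinct for the reduction to work.\<close>
  using nae_satisfiable_imp_has_L_colouring nae_satisfiable_of_L_colouring[OF assms(1)]
  unfolding has_L_colouring_iff by blast

end
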